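(* Fix an integer $q\ge 2$ and $c\in\mathbb{R}$. Then $\gamma(c)=\beta(c)/\log q$, where $\gamma(c)$ is the infimum of all real $\gamma$ such that $\sup_{x\in\mathbb{R}}\left|\sum_{n=0}^{N-1}e^{2\pi i cS_q(n)}e^{2\pi i n x}\right|=O(N^\gamma)$, and $\beta(c)=\sup_{\mu\in\mathcal{M}_T}\int_{\mathbb{T}}f_c\,d\mu$ with $f_c(x)=\log\left|\frac{\sin \pi q(x+c)}{\sin\pi(x+c)}\right|$.
   Context: $S_q(n)$ is the sum of the base-$q$ digits of $n\ge 0$. $\mathbb{T}=\mathbb{R}/\mathbb{Z}$, $T:\mathbb{T}\to\mathbb{T}$ is $Tx=qx\bmod 1$, and $\mathcal{M}_T$ is the set of $T$-invariant Borel probability measures on $\mathbb{T}$. *)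

theory Defs
  imports "HOL-Probability.Probability" "HOL-Library.Landau_Symbols"
begin

function digit_sum :: "nat \<Rightarrow> nat \<Rightarrow> nat" where
  "digit_sum q n = (if q < 2 \<or> n = 0 then 0 else n mod q + digit_sum q (n div q))"
  by auto
termination by (relation "Wellfounded.measure snd") auto

declare digit_sum.simps[simp del]

text \<open>The circle T = R/Z is represented by the fundamental domain [0,1) with its Borel sets;
  the map T x = q x mod 1.\<close>
definition times_q_map :: "nat \<Rightarrow> real \<Rightarrow> real" where
  "times_q_map q x = frac (real q * x)"

definition circle_borel :: "real measure" where
  "circle_borel = restrict_space borel {0..<1}"

definition invariant_measures :: "nat \<Rightarrow> real measure set" where
  "invariant_measures q = {M. sets M = sets circle_borel \<and> prob_space M \<and>
      times_q_map q \<in> measurable M M \<and> distr M M (times_q_map q) = M}"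

text \<open>f_c(x) = log |sin(pi q (x+c)) / sin(pi (x+c))|, with value -\<infinity> at zeros of the
  numerator and its continuous extension (log q) at the removable singularities x+c \<in> Z.\<close>
definition f_c :: "nat \<Rightarrow> real \<Rightarrow> real \<Rightarrow> ereal" where
  "f_c q c x = (let y = x + c in
     if y \<in> \<int> then ereal (ln (real q))
     else if sin (pi * real q * y) = 0 then -\<infinity>
     else ereal (ln \<bar>sin (pi * real q * y) / sin (pi * y)\<bar>))"

text \<open>Integral of an extended-real function bounded above by a real constant b:
  b - \<integral>(b - f) d\<mu> (the latter a nonnegative integral, possibly \<infinity>).\<close>
definition upper_bdd_integral :: "real measure \<Rightarrow> real \<Rightarrow> (real \<Rightarrow> ereal) \<Rightarrow> ereal" where
  "upper_bdd_integral M b f =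
     ereal b - enn2ereal (\<integral>\<^sup>+ x. e2ennreal (ereal b - f x) \<partial>M)"

definition beta_c :: "nat \<Rightarrow> real \<Rightarrow> ereal" where
  "beta_c q c = (SUP M \<in> invariant_measures q. upper_bdd_integral M (ln (real q)) (f_c q c))"

definition gamma_c :: "nat \<Rightarrow> real \<Rightarrow> real" where
  "gamma_c q c = Inf {g :: real.
     (\<lambda>N::nat. SUP x :: real. cmod (\<Sum>n<N. exp (2 * pi * \<i> * complex_of_real (c * real (digit_sum q n)))
                                       * exp (2 * pi * \<i> * complex_of_real (real n * x))))
       \<in> O(\<lambda>N. real N powr g)}"

end

(* Writing e(t) = exp(2 pi i t) and D_q(u) = sum_{d<q} e(d u), the sum
   Phi_N(x) = sum_{n<N} e(c s_q(n) + n x) factorises over the base-q digits: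
   |Phi_{q^k}(x)| = prod_{j<k} |D_q(q^j x + c)|, and log |D_q(x + c)| = f_c(x).  So
   log |Phi_{q^k}(x)| is the Birkhoff sum of f_c along the T-orbit of x.

   If sup_x |Phi_N(x)| = O(N^g), integrating these Birkhoff sums against an invariant measure
   gives beta(c) <= g log q.  Conversely, if beta(c) < b, the grid points a / (q^L - 1) are
   T-periodic and their orbit measures are invariant, so the digit product of length L is at
   most e^{L b} on that grid; interpolation with the Dirichlet kernel extends this to all x at
   the cost of a factor O(L), and summing over the digits of N yields
   sup_x |Phi_N(x)| = O(N^{b / log q} log^2 N).  Parseval's identity on the grid a / N gives
   gamma(c) >= 1/2, which excludes beta(c) = -infinity. *)

theory Submission
  imports Defs
begin

section \<open>Exponentials and the Dirichlet kernel\<close>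

definition e2pi :: "real \<Rightarrow> complex" where
  "e2pi t = exp (2 * pi * \<i> * complex_of_real t)"

lemma e2pi_add: "e2pi (a + b) = e2pi a * e2pi b"
  unfolding e2pi_def by (simp add: distrib_left exp_add[symmetric])

lemma norm_e2pi [simp]: "norm (e2pi t) = 1"
  unfolding e2pi_def
  by (simp add: norm_exp_i_times[of "2*pi*t", simplified mult.assoc] mult.commute mult.left_commute)

lemma cnj_e2pi: "cnj (e2pi t) = e2pi (- t)"
  unfolding e2pi_def by (simp add: exp_cnj)

lemma e2pi_0: "e2pi 0 = 1"
  by (simp add: e2pi_def)

lemma e2pi_Ints: "x \<in> \<int> \<Longrightarrow> e2pi x = 1"
  unfolding e2pi_def by (auto elim!: Ints_cases simp: exp_integer_2pi mult.commute mult.left_commute)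

lemma e2pi_of_nat [simp]: "e2pi (real n) = 1"
  by (rule e2pi_Ints) auto

lemma e2pi_cong_Ints: "x - y \<in> \<int> \<Longrightarrow> e2pi x = e2pi y"
  using e2pi_add[of "x - y" y] e2pi_Ints[of "x - y"] by simp

lemma e2pi_of_nat_mult: "e2pi (real n * t) = e2pi t ^ n"
  unfolding e2pi_def by (simp add: exp_of_nat_mult[symmetric] mult.commute mult.left_commute)

lemma sin_pi_times_eq_0_iff: "sin (pi * y) = 0 \<longleftrightarrow> y \<in> \<int>"
  using sin_times_pi_eq_0[of y] by (simp add: mult.commute)

lemma e2pi_eq_cis: "e2pi t = cis (2 * pi * t)"
  unfolding e2pi_def by (simp add: cis_conv_exp mult.commute mult.left_commute)

lemma norm_e2pi_minus_1: "norm (e2pi t - 1) = 2 * \<bar>sin (pi * t)\<bar>"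
proof -
  have "(norm (e2pi t - 1))\<^sup>2 = (cos (2 * (pi * t)) - 1)\<^sup>2 + (sin (2 * (pi * t)))\<^sup>2"
    by (simp add: cmod_power2 e2pi_eq_cis mult.assoc)
  also have "\<dots> = (2 * \<bar>sin (pi * t)\<bar>)\<^sup>2"
    unfolding cos_double_sin sin_double power_mult_distrib cos_squared_eq
    by (simp add: power2_eq_square algebra_simps)
  finally show ?thesis
    by (rule power2_eq_imp_eq) auto
qed

lemma e2pi_eq_1_iff: "e2pi t = 1 \<longleftrightarrow> t \<in> \<int>"
  using norm_e2pi_minus_1[of t] sin_pi_times_eq_0_iff[of t] by auto

definition dirichlet_kernel :: "nat \<Rightarrow> real \<Rightarrow> complex" where
  "dirichlet_kernel M u = (\<Sum>n<M. e2pi (real n * u))"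

lemma norm_dirichlet_kernel_le: "norm (dirichlet_kernel M u) \<le> real M"
  using norm_sum[of "\<lambda>n. e2pi (real n * u)" "{..<M}"] by (simp add: dirichlet_kernel_def)

lemma dirichlet_kernel_Ints: "u \<in> \<int> \<Longrightarrow> dirichlet_kernel M u = of_nat M"
  unfolding dirichlet_kernel_def by (simp add: e2pi_Ints)

lemma dirichlet_kernel_geometric:
  assumes "u \<notin> \<int>"
  shows "dirichlet_kernel M u = (e2pi (real M * u) - 1) / (e2pi u - 1)"
proof -
  have "e2pi u \<noteq> 1" using assms e2pi_eq_1_iff by blast
  then show ?thesis
    unfolding dirichlet_kernel_def e2pi_of_nat_mult by (rule geometric_sum)
qed

lemma norm_dirichlet_kernel_nonint:
  assumes "u \<notin> \<int>"
  shows "norm (dirichlet_kernel M u) = \<bar>sin (pi * real M * u) / sin (pi * u)\<bar>"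
  using assms by (simp add: dirichlet_kernel_geometric norm_divide norm_e2pi_minus_1 mult.assoc)

lemma norm_dirichlet_kernel_le_inverse_sin:
  assumes "u \<notin> \<int>"
  shows "norm (dirichlet_kernel M u) \<le> 1 / \<bar>sin (pi * u)\<bar>"
proof -
  have "\<bar>sin (pi * real M * u)\<bar> / \<bar>sin (pi * u)\<bar> \<le> 1 / \<bar>sin (pi * u)\<bar>"
    by (rule divide_right_mono) auto
  then show ?thesis
    using assms by (simp add: norm_dirichlet_kernel_nonint)
qed

lemma ln_norm_dirichlet_kernel_le:
  assumes "dirichlet_kernel M u \<noteq> 0"
  shows "ln (norm (dirichlet_kernel M u)) \<le> ln (real M)"
proof -
  have "M \<noteq> 0"
    using assms by (cases M) (auto simp: dirichlet_kernel_def)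
  then show ?thesis
    using assms norm_dirichlet_kernel_le[of M u] by (subst ln_le_cancel_iff) auto
qed

lemma dirichlet_kernel_cong_Ints: "u - u' \<in> \<int> \<Longrightarrow> dirichlet_kernel M u = dirichlet_kernel M u'"
  unfolding dirichlet_kernel_def
  by (intro sum.cong refl e2pi_cong_Ints) (auto simp: right_diff_distrib[symmetric])

lemma continuous_on_dirichlet_kernel: "continuous_on A (dirichlet_kernel M)"
  unfolding dirichlet_kernel_def e2pi_def by (intro continuous_intros)

lemma dirichlet_kernel_grid:
  assumes "n < M" "n' < M"
  shows "dirichlet_kernel M ((real n' - real n) / real M) = (if n = n' then of_nat M else 0)"
proof (cases "n = n'")
  case False
  have M: "0 < M" using assms by simp
  have "(real n' - real n) / real M \<notin> \<int>"
  proof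
    assume "(real n' - real n) / real M \<in> \<int>"
    then obtain k :: int where "real n' - real n = of_int k * real M"
      using M by (auto elim!: Ints_cases simp: field_simps)
    then have k: "int n' - int n = k * int M"
      by (metis of_int_eq_iff of_int_diff of_int_mult of_int_of_nat_eq)
    have "\<bar>int n' - int n\<bar> < int M"
      using assms by auto
    then have "\<bar>k\<bar> * int M < int M"
      using k by (simp add: abs_mult)
    then have "k = 0" using M by (simp add: mult_less_cancel_right2)
    then show False using k False by simp
  qed
  then show ?thesis
    using False M by (simp add: dirichlet_kernel_geometric e2pi_Ints)
qed (simp add: dirichlet_kernel_Ints)

lemma e2pi_grid_product:
  "e2pi (real n' * (real a / real M)) * e2pi (real n * (y - real a / real M))
     = e2pi (real n * y) * e2pi (real a * ((real n' - real n) / real M))"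
  unfolding e2pi_add[symmetric] by (rule arg_cong[where f = e2pi]) (simp add: algebra_simps diff_divide_distrib)

lemma trig_poly_interpolation:
  assumes M: "0 < M"
  shows "(\<Sum>n<M. cf n * e2pi (real n * y)) =
     (\<Sum>a<M. (\<Sum>n'<M. cf n' * e2pi (real n' * (real a / real M))) * dirichlet_kernel M (y - real a / real M))
       / of_nat M"
proof -
  have "(\<Sum>a<M. (\<Sum>n'<M. cf n' * e2pi (real n' * (real a / real M))) * dirichlet_kernel M (y - real a / real M))
      = (\<Sum>a<M. \<Sum>n'<M. \<Sum>n<M. cf n' * e2pi (real n * y) * e2pi (real a * ((real n' - real n) / real M)))"
    unfolding dirichlet_kernel_def sum_product
    by (intro sum.cong refl) (simp only: mult.assoc e2pi_grid_product)
  also have "\<dots> = (\<Sum>n'<M. \<Sum>n<M. cf n' * e2pi (real n * y) * dirichlet_kernel M ((real n' - real n) / real M))"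
    unfolding dirichlet_kernel_def sum_distrib_left by (subst sum.swap) (subst (2) sum.swap, rule refl)
  also have "\<dots> = (\<Sum>n'<M. \<Sum>n<M. cf n' * e2pi (real n * y) * (if n = n' then of_nat M else 0))"
    by (intro sum.cong refl) (simp add: dirichlet_kernel_grid)
  also have "\<dots> = (\<Sum>n'<M. cf n' * e2pi (real n' * y) * of_nat M)"
    by (simp add: if_distrib cong: if_cong)
  finally show ?thesis
    using M by (simp add: sum_distrib_right[symmetric])
qed

lemma sum_norm_trig_poly_grid_squared:
  assumes M: "0 < M"
  shows "(\<Sum>a<M. (norm (\<Sum>n<M. cf n * e2pi (real n * (real a / real M))))\<^sup>2)
       = real M * (\<Sum>n<M. (norm (cf n))\<^sup>2)"
proof -
  have prod: "e2pi (real n * (real a / real M)) * cnj (e2pi (real n' * (real a / real M)))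
      = e2pi (real a * ((real n - real n') / real M))" for n n' a
    unfolding cnj_e2pi e2pi_add[symmetric]
    by (rule arg_cong[where f = e2pi]) (simp add: algebra_simps diff_divide_distrib)
  have "complex_of_real (\<Sum>a<M. (norm (\<Sum>n<M. cf n * e2pi (real n * (real a / real M))))\<^sup>2)
      = (\<Sum>a<M. \<Sum>n<M. \<Sum>n'<M. cf n * cnj (cf n') * e2pi (real a * ((real n - real n') / real M)))"
    unfolding of_real_sum complex_norm_square cnj_sum complex_cnj_mult sum_product
    by (intro sum.cong refl) (subst prod[symmetric], simp add: mult_ac)
  also have "\<dots> = (\<Sum>n<M. \<Sum>n'<M. cf n * cnj (cf n') * dirichlet_kernel M ((real n - real n') / real M))"
    unfolding dirichlet_kernel_def sum_distrib_left by (subst sum.swap) (subst (2) sum.swap, rule refl)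
  also have "\<dots> = (\<Sum>n<M. \<Sum>n'<M. cf n * cnj (cf n') * (if n' = n then of_nat M else 0))"
    by (intro sum.cong refl) (simp add: dirichlet_kernel_grid)
  also have "\<dots> = complex_of_real (real M * (\<Sum>n<M. (norm (cf n))\<^sup>2))"
    by (simp add: if_distrib sum_distrib_left complex_norm_square[symmetric] mult_ac cong: if_cong)
  finally show ?thesis
    by (simp only: of_real_eq_iff)
qed

section \<open>Sampling trigonometric polynomials on a grid\<close>

lemma sin_ge_third:
  assumes "0 \<le> x" "x \<le> pi / 2"
  shows "x / 3 \<le> sin x"
proof -
  have "\<bar>sin x - (\<Sum>m<3. sin_coeff m * x ^ m)\<bar> \<le> inverse (fact 3) * \<bar>x\<bar> ^ 3"
    by (rule Maclaurin_sin_bound)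
  moreover have "(\<Sum>m<3. sin_coeff m * x ^ m) = x"
    by (simp add: eval_nat_numeral sin_coeff_def)
  ultimately have "x - x ^ 3 / 6 \<le> sin x"
    using assms by (simp add: eval_nat_numeral abs_if split: if_splits)
  moreover have "x * x \<le> 2 * 2"
    using assms pi_less_4 by (intro mult_mono) auto
  then have "x ^ 3 / 6 \<le> 2 * x / 3"
    using mult_right_mono[of "x * x" 4 x] assms by (simp add: power3_eq_cube)
  ultimately show ?thesis by linarith
qed

lemma min_le_sin_pi_times:
  assumes "0 < v" "v < 1"
  shows "min v (1 - v) \<le> sin (pi * v)"
proof -
  have le_sin: "w \<le> sin (pi * w)" if "0 < w" "w \<le> 1 / 2" for w
  proof -
    have "w \<le> pi * w / 3"
      using that pi_gt3 by simp
    also have "\<dots> \<le> sin (pi * w)"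
      using that by (intro sin_ge_third) auto
    finally show ?thesis .
  qed
  have reflect: "sin (pi * (1 - v)) = sin (pi * v)"
    by (simp add: right_diff_distrib sin_diff)
  show ?thesis
  proof (cases "v \<le> 1 / 2")
    case True
    then show ?thesis using le_sin[of v] assms by (simp add: min_def)
  next
    case False
    then show ?thesis using le_sin[of "1 - v", unfolded reflect] assms by (simp add: min_def)
  qed
qed

lemma inverse_sin_pi_times_le:
  assumes "0 < v" "v < 1"
  shows "1 / sin (pi * v) \<le> 1 / v + 1 / (1 - v)"
proof -
  have "min v (1 - v) \<le> sin (pi * v)" "0 < min v (1 - v)"
    using min_le_sin_pi_times[OF assms] assms by auto
  then have "1 / sin (pi * v) \<le> 1 / min v (1 - v)"
    by (intro divide_left_mono) auto
  also have "\<dots> \<le> 1 / v + 1 / (1 - v)"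
    using assms by (auto simp: min_def)
  finally show ?thesis .
qed

lemma harm_le_1_plus_ln: "(harm n :: real) \<le> 1 + ln (real n)"
proof (cases "n = 0")
  case False
  then have "harm n - ln (real n) \<le> harm 1 - ln (real 1 :: real)"
    by (intro euler_mascheroni_sequence_decreasing) auto
  then show ?thesis by (simp add: harm_def)
qed (simp add: harm_def)

lemma sum_lessThan_shift_periodic:
  assumes "f L = f 0"
  shows "(\<Sum>j<L. f (Suc j)) = (\<Sum>j<L. f j)"
proof (cases L)
  case (Suc L')
  have "(\<Sum>j<Suc L'. f (Suc j)) = (\<Sum>j<L'. f (Suc j)) + f (Suc L')"
    by (rule sum.lessThan_Suc)
  also have "\<dots> = f 0 + (\<Sum>j<L'. f (Suc j))"
    using assms Suc by (simp add: add.commute)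
  also have "\<dots> = (\<Sum>j<Suc L'. f j)"
    by (rule sum.lessThan_Suc_shift[symmetric])
  finally show ?thesis
    using Suc by simp
qed simp

lemma sum_lessThan_shift_periodic_iter:
  fixes f :: "nat \<Rightarrow> 'a::comm_monoid_add"
  assumes "\<And>a. f (a + M) = f a"
  shows "(\<Sum>a<M. f (a + j)) = (\<Sum>a<M. f a)"
proof (induction j)
  case (Suc j)
  have "(\<Sum>a<M. f (Suc a + j)) = (\<Sum>a<M. f (a + j))"
    using assms[of j] by (intro sum_lessThan_shift_periodic) (simp add: add.commute)
  then show ?case
    using Suc by simp
qed simp

lemma norm_dirichlet_kernel_grid_shift_le:
  assumes a: "a < M" and \<theta>: "0 \<le> \<theta>" "\<theta> < 1"
  shows "norm (dirichlet_kernel M ((\<theta> - real a) / real M))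
       \<le> (if a = 0 then real M else 2 * real M / real a + real M / real (M - a))"
proof (cases "a \<le> 1")
  case True
  have bound: "norm (dirichlet_kernel M ((\<theta> - real a) / real M)) \<le> real M"
    by (rule norm_dirichlet_kernel_le)
  show ?thesis
  proof (cases "a = 0")
    case False
    with True have "a = 1" by simp
    then have "real M \<le> 2 * real M / real a + real M / real (M - a)"
      using a by simp
    then show ?thesis
      using order_trans[OF bound] False by simp
  qed (use bound in simp)
next
  case False
  define v where "v = (real a - \<theta>) / real M"
  have v: "0 < v" "v < 1"
    unfolding v_def using False a \<theta> by (auto simp: field_simps)
  have "(\<theta> - real a) / real M = - v"
    unfolding v_def by (simp add: minus_divide_left)
  moreover have "- v \<notin> \<int>"
    using v Ints_nonzero_abs_less1[of "- v"] by auto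
  moreover have "0 < sin (pi * v)"
    using v by (intro sin_gt_zero) auto
  ultimately have "norm (dirichlet_kernel M ((\<theta> - real a) / real M)) \<le> 1 / sin (pi * v)"
    using norm_dirichlet_kernel_le_inverse_sin[of "- v" M] by simp
  also have "\<dots> \<le> 1 / v + 1 / (1 - v)"
    by (rule inverse_sin_pi_times_le[OF v])
  also have "1 / v \<le> 2 * real M / real a"
  proof -
    have "1 / v = real M / (real a - \<theta>)"
      unfolding v_def by simp
    also have "\<dots> \<le> real M / (real a / 2)"
      using False \<theta> by (intro divide_left_mono) auto
    finally show ?thesis by (simp add: mult.commute)
  qed
  also have "1 / (1 - v) \<le> real M / real (M - a)"
    unfolding v_def using a \<theta> by (simp add: of_nat_diff field_simps)
  finally show ?thesis
    using False by simp
qed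

lemma sum_grid_shift_bound_le:
  assumes M: "0 < M"
  shows "(\<Sum>a<M. if a = 0 then real M else 2 * real M / real a + real M / real (M - a))
       \<le> real M * (4 + 3 * ln (real M))"
proof -
  obtain M' where M': "M = Suc M'"
    using M by (cases M) auto
  have harm: "(\<Sum>a<M'. 1 / real (Suc a)) = harm M'"
    unfolding harm_def One_nat_def sum.atLeast1_atMost_eq by (simp add: inverse_eq_divide)
  have reverse: "(\<Sum>a<M'. 1 / real (M' - a)) = (\<Sum>a<M'. 1 / real (Suc a))"
    by (subst sum.nat_diff_reindex[symmetric]) (simp add: Suc_diff_Suc)
  have "(\<Sum>a<M. if a = 0 then real M else 2 * real M / real a + real M / real (M - a))
      = real M + (\<Sum>a<M'. 2 * real M / real (Suc a) + real M / real (M' - a))"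
    unfolding M' by (subst sum.lessThan_Suc_shift) simp
  also have "\<dots> = real M + 2 * real M * (\<Sum>a<M'. 1 / real (Suc a)) + real M * (\<Sum>a<M'. 1 / real (M' - a))"
    by (simp add: sum.distrib sum_distrib_left)
  finally have "(\<Sum>a<M. if a = 0 then real M else 2 * real M / real a + real M / real (M - a))
      = real M + 3 * real M * harm M'"
    unfolding reverse harm by simp
  moreover have "harm M' \<le> 1 + ln (real M)"
  proof (cases "M' = 0")
    case False
    then have "ln (real M') \<le> ln (real M)"
      using M' by simp
    then show ?thesis
      using harm_le_1_plus_ln[of M'] by linarith
  qed (simp add: M' harm_def)
  ultimately show ?thesis
    using mult_left_mono[of "harm M'" "1 + ln (real M)" "3 * real M"] by (simp add: algebra_simps)
qed

lemma sum_norm_dirichlet_kernel_grid_le: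
  assumes M: "0 < M"
  shows "(\<Sum>a<M. norm (dirichlet_kernel M (y - real a / real M))) \<le> real M * (4 + 3 * ln (real M))"
proof -
  \<comment> \<open>Rotate the grid so that its point \<open>j / M\<close> just below \<open>frac y\<close> gets index \<open>0\<close>.\<close>
  define j where "j = nat \<lfloor>real M * frac y\<rfloor>"
  define \<theta> where "\<theta> = real M * frac y - real j"
  have "real j = of_int \<lfloor>real M * frac y\<rfloor>"
    unfolding j_def by simp
  then have \<theta>: "0 \<le> \<theta>" "\<theta> < 1"
    unfolding \<theta>_def by linarith+
  define f where "f a = norm (dirichlet_kernel M ((\<theta> + real j - real a) / real M))" for a
  have "f (a + M) = f a" for a
    unfolding f_def using M
    by (intro arg_cong[where f = norm] dirichlet_kernel_cong_Ints) (simp add: field_simps)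
  have "(\<Sum>a<M. norm (dirichlet_kernel M (y - real a / real M))) = (\<Sum>a<M. f a)"
    unfolding f_def \<theta>_def using M
    by (intro sum.cong refl arg_cong[where f = norm] dirichlet_kernel_cong_Ints)
      (simp add: frac_def field_simps)
  also have "\<dots> = (\<Sum>a<M. f (a + j))"
    by (rule sum_lessThan_shift_periodic_iter[symmetric]) fact
  also have "\<dots> = (\<Sum>a<M. norm (dirichlet_kernel M ((\<theta> - real a) / real M)))"
    unfolding f_def by simp
  also have "\<dots> \<le> (\<Sum>a<M. if a = 0 then real M else 2 * real M / real a + real M / real (M - a))"
    by (intro sum_mono norm_dirichlet_kernel_grid_shift_le \<theta>) simp
  also have "\<dots> \<le> real M * (4 + 3 * ln (real M))"
    by (rule sum_grid_shift_bound_le[OF M])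
  finally show ?thesis .
qed

lemma norm_trig_poly_le_grid_bound:
  assumes M: "0 < M"
    and B: "\<And>a. a < M \<Longrightarrow> norm (\<Sum>n<M. cf n * e2pi (real n * (real a / real M))) \<le> B"
  shows "norm (\<Sum>n<M. cf n * e2pi (real n * y)) \<le> (4 + 3 * ln (real M)) * B"
proof -
  have B0: "0 \<le> B"
    using B[of 0] M norm_ge_zero order_trans by blast
  have "norm (\<Sum>n<M. cf n * e2pi (real n * y))
      \<le> (\<Sum>a<M. norm (\<Sum>n'<M. cf n' * e2pi (real n' * (real a / real M)))
                  * norm (dirichlet_kernel M (y - real a / real M))) / real M"
    unfolding trig_poly_interpolation[OF M, of cf y] norm_divide norm_of_nat
    by (intro divide_right_mono order_trans[OF norm_sum]) (simp_all add: norm_mult)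
  also have "\<dots> \<le> (\<Sum>a<M. B * norm (dirichlet_kernel M (y - real a / real M))) / real M"
    using B by (intro divide_right_mono sum_mono mult_right_mono) auto
  also have "\<dots> \<le> B * (real M * (4 + 3 * ln (real M))) / real M"
    unfolding sum_distrib_left[symmetric]
    by (intro divide_right_mono mult_left_mono sum_norm_dirichlet_kernel_grid_le M B0) simp
  finally show ?thesis
    using M by (simp add: mult.commute)
qed

text \<open>On the grid \<open>a / M\<close> the top term \<open>e(M x)\<close> coincides with \<open>e(0)\<close>, so it is folded into
  the constant coefficient.\<close>
lemma norm_trig_poly_Suc_le_grid_bound:
  assumes M: "0 < M"
    and B: "\<And>a. a < M \<Longrightarrow> norm (\<Sum>n<Suc M. cf n * e2pi (real n * (real a / real M))) \<le> B"
  shows "norm (\<Sum>n<Suc M. cf n * e2pi (real n * y)) \<le> 2 * norm (cf M) + (4 + 3 * ln (real M)) * B"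
proof -
  define cf' where "cf' n = cf n + (if n = 0 then cf M else 0)" for n
  have fold: "(\<Sum>n<Suc M. cf n * e2pi (real n * x))
      = (\<Sum>n<M. cf' n * e2pi (real n * x)) + cf M * (e2pi (real M * x) - 1)" for x
  proof -
    have "(\<Sum>n<M. (if n = 0 then cf M else 0) * e2pi (real n * x)) = cf M"
      using M by (simp add: if_distrib[of "\<lambda>z. z * _"] e2pi_0 cong: if_cong)
    then show ?thesis
      by (simp add: cf'_def distrib_right sum.distrib algebra_simps)
  qed
  have "norm (\<Sum>n<M. cf' n * e2pi (real n * (real a / real M))) \<le> B" if "a < M" for a
    using B[OF that] fold[of "real a / real M"] M by simp
  then have "norm (\<Sum>n<M. cf' n * e2pi (real n * y)) \<le> (4 + 3 * ln (real M)) * B"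
    by (rule norm_trig_poly_le_grid_bound[OF M])
  moreover have "norm (cf M * (e2pi (real M * y) - 1)) \<le> norm (cf M) * 2"
    unfolding norm_mult using norm_triangle_ineq4[of "e2pi (real M * y)" 1]
    by (intro mult_left_mono) auto
  ultimately show ?thesis
    unfolding fold
    using norm_triangle_ineq[of "\<Sum>n<M. cf' n * e2pi (real n * y)" "cf M * (e2pi (real M * y) - 1)"]
    by linarith
qed

section \<open>Invariant measures and periodic orbits\<close>

lemma distr_funpow_invariant:
  assumes T: "T \<in> M \<rightarrow>\<^sub>M M" and inv: "distr M M T = M"
  shows "distr M M (T ^^ j) = M"
proof (induction j)
  case 0
  then show ?case using distr_id2[of M] by (simp add: id_def)
next
  case (Suc j)
  have "distr M M (T ^^ Suc j) = distr (distr M M T) M (T ^^ j)"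
    unfolding funpow_Suc_right by (rule distr_distr[symmetric]) (auto intro: measurable_compose_n T)
  also have "\<dots> = M"
    using Suc inv by simp
  finally show ?case .
qed

lemma nn_integral_sum_funpow_invariant:
  assumes T: "T \<in> M \<rightarrow>\<^sub>M M" and inv: "distr M M T = M" and u: "u \<in> borel_measurable M"
  shows "(\<integral>\<^sup>+ x. (\<Sum>j<k. u ((T ^^ j) x)) \<partial>M) = of_nat k * (\<integral>\<^sup>+ x. u x \<partial>M)"
proof -
  have Tj: "T ^^ j \<in> M \<rightarrow>\<^sub>M M" for j
    by (rule measurable_compose_n[OF T])
  have "(\<integral>\<^sup>+ x. u ((T ^^ j) x) \<partial>M) = (\<integral>\<^sup>+ x. u x \<partial>distr M M (T ^^ j))" for j
    using Tj u by (simp add: nn_integral_distr)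
  then have "(\<integral>\<^sup>+ x. u ((T ^^ j) x) \<partial>M) = (\<integral>\<^sup>+ x. u x \<partial>M)" for j
    by (simp add: distr_funpow_invariant[OF T inv])
  then show ?thesis
    by (subst nn_integral_sum) (auto intro: measurable_compose[OF Tj u])
qed

definition orbit_measure :: "'a measure \<Rightarrow> ('a \<Rightarrow> 'a) \<Rightarrow> 'a \<Rightarrow> nat \<Rightarrow> 'a measure" where
  "orbit_measure N T y L = distr (uniform_count_measure {..<L}) N (\<lambda>j. (T ^^ j) y)"

lemma measurable_orbit:
  assumes "T \<in> N \<rightarrow>\<^sub>M N" "y \<in> space N"
  shows "(\<lambda>j. (T ^^ j) y) \<in> uniform_count_measure {..<L} \<rightarrow>\<^sub>M N"
  using assms
  by (subst measurable_cong_sets[OF sets_uniform_count_measure_count_space refl])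
    (auto intro: measurable_space[OF measurable_compose_n])

lemma sets_orbit_measure [simp, measurable_cong]: "sets (orbit_measure N T y L) = sets N"
  by (simp add: orbit_measure_def)

lemma prob_space_orbit_measure:
  assumes "T \<in> N \<rightarrow>\<^sub>M N" "y \<in> space N" "0 < L"
  shows "prob_space (orbit_measure N T y L)"
  unfolding orbit_measure_def using assms
  by (intro prob_space.prob_space_distr prob_space_uniform_count_measure measurable_orbit) auto

lemma card_filter_lessThan: "card {j \<in> {..<L}. P j} = (\<Sum>j<L. if P j then 1 else 0)" for L :: nat
  unfolding card_eq_sum by (rule sum.inter_filter) simp

lemma distr_orbit_measure_periodic:
  assumes T: "T \<in> N \<rightarrow>\<^sub>M N" and y: "y \<in> space N" and per: "(T ^^ L) y = y"
  shows "distr (orbit_measure N T y L) N T = orbit_measure N T y L"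
proof -
  define orb where "orb j = (T ^^ j) y" for j
  define U where "U = uniform_count_measure {..<L}"
  have orb: "orb \<in> U \<rightarrow>\<^sub>M N"
    unfolding orb_def U_def by (rule measurable_orbit[OF T y])
  have "distr (orbit_measure N T y L) N T = distr U N (T \<circ> orb)"
    unfolding orbit_measure_def U_def[symmetric] orb_def[symmetric] by (rule distr_distr[OF T orb])
  also have "\<dots> = distr U N orb"
  proof (rule measure_eqI)
    fix A assume "A \<in> sets (distr U N (T \<circ> orb))"
    then have A: "A \<in> sets N" by simp
    \<comment> \<open>\<open>T\<close> shifts the orbit by one step, and periodicity wraps the last point around to the first.\<close>
    have "card {j \<in> {..<L}. orb (Suc j) \<in> A} = card {j \<in> {..<L}. orb j \<in> A}"
      unfolding card_filter_lessThan by (rule sum_lessThan_shift_periodic) (simp add: orb_def per)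
    moreover have "(T \<circ> orb) -` A \<inter> space U = {j \<in> {..<L}. orb (Suc j) \<in> A}"
      "orb -` A \<inter> space U = {j \<in> {..<L}. orb j \<in> A}"
      by (auto simp: U_def orb_def space_uniform_count_measure)
    ultimately show "emeasure (distr U N (T \<circ> orb)) A = emeasure (distr U N orb) A"
      using A orb measurable_comp[OF orb T]
      by (simp add: emeasure_distr U_def) (subst (1 2) emeasure_uniform_count_measure; auto)
  qed simp
  finally show ?thesis
    unfolding orbit_measure_def U_def orb_def .
qed

lemma nn_integral_orbit_measure:
  assumes T: "T \<in> N \<rightarrow>\<^sub>M N" and y: "y \<in> space N" and u: "u \<in> borel_measurable N"
  shows "(\<integral>\<^sup>+ x. u x \<partial>orbit_measure N T y L) = (\<Sum>j<L. ennreal (1 / real L) * u ((T ^^ j) y))"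
proof -
  have "(\<integral>\<^sup>+ x. u x \<partial>orbit_measure N T y L) = (\<integral>\<^sup>+ j. u ((T ^^ j) y) \<partial>uniform_count_measure {..<L})"
    unfolding orbit_measure_def using u by (intro nn_integral_distr measurable_orbit[OF T y]) simp
  then show ?thesis
    by (simp add: uniform_count_measure_def nn_integral_point_measure_finite)
qed

section \<open>The digit exponential sum\<close>

definition digit_exp_sum :: "nat \<Rightarrow> real \<Rightarrow> nat \<Rightarrow> real \<Rightarrow> complex" where
  "digit_exp_sum q c N x = (\<Sum>n<N. e2pi (c * real (digit_sum q n)) * e2pi (real n * x))"

definition digit_product :: "nat \<Rightarrow> real \<Rightarrow> nat \<Rightarrow> real \<Rightarrow> real" where
  "digit_product q c k x = (\<Prod>j<k. norm (dirichlet_kernel q (real q ^ j * x + c)))"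

lemma digit_sum_mult_add:
  assumes "2 \<le> q" "d < q"
  shows "digit_sum q (q * m + d) = d + digit_sum q m"
proof (cases "q * m + d = 0")
  case True
  then show ?thesis using assms by (simp add: digit_sum.simps)
next
  case False
  then have "digit_sum q (q * m + d) = (q * m + d) mod q + digit_sum q ((q * m + d) div q)"
    using assms by (subst digit_sum.simps) auto
  then show ?thesis
    using assms by simp
qed

lemma sum_lessThan_add: "(\<Sum>n<a + b. f n) = (\<Sum>n<a. f n) + (\<Sum>n<b. f (a + n))" for a b :: nat
  by (induction b) (auto simp: add_ac)

lemma norm_digit_exp_sum_le: "norm (digit_exp_sum q c N x) \<le> real N"
  using norm_sum[of "\<lambda>n. e2pi (c * real (digit_sum q n)) * e2pi (real n * x)" "{..<N}"]
  by (simp add: digit_exp_sum_def norm_mult)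

lemma digit_exp_sum_mult:
  assumes "2 \<le> q"
  shows "digit_exp_sum q c (q * M) x = dirichlet_kernel q (x + c) * digit_exp_sum q c M (real q * x)"
proof (induction M)
  case 0
  then show ?case by (simp add: digit_exp_sum_def)
next
  case (Suc M)
  have block: "e2pi (c * real (digit_sum q (q * M + d))) * e2pi (real (q * M + d) * x)
      = e2pi (real d * (x + c)) * (e2pi (c * real (digit_sum q M)) * e2pi (real M * (real q * x)))"
    if "d < q" for d
  proof -
    have "c * real (digit_sum q (q * M + d)) + real (q * M + d) * x
        = real d * (x + c) + (c * real (digit_sum q M) + real M * (real q * x))"
      using digit_sum_mult_add[OF assms that] by (simp add: algebra_simps)
    then show ?thesis
      by (metis e2pi_add)
  qed
  have "digit_exp_sum q c (q * Suc M) x = digit_exp_sum q c (q * M) x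
      + (\<Sum>d<q. e2pi (c * real (digit_sum q (q * M + d))) * e2pi (real (q * M + d) * x))"
    unfolding mult_Suc_right add.commute[of q] digit_exp_sum_def sum_lessThan_add by simp
  also have "\<dots> = digit_exp_sum q c (q * M) x
      + dirichlet_kernel q (x + c) * (e2pi (c * real (digit_sum q M)) * e2pi (real M * (real q * x)))"
    using block by (simp add: dirichlet_kernel_def sum_distrib_right)
  finally show ?case
    using Suc by (simp add: digit_exp_sum_def distrib_left)
qed

lemma digit_product_Suc:
  "digit_product q c (Suc k) x = norm (dirichlet_kernel q (x + c)) * digit_product q c k (real q * x)"
  unfolding digit_product_def prod.lessThan_Suc_shift by (simp add: mult.assoc mult.left_commute)

lemma digit_product_0 [simp]: "digit_product q c 0 x = 1"
  by (simp add: digit_product_def)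

lemma digit_product_nonneg: "0 \<le> digit_product q c k x"
  by (simp add: digit_product_def prod_nonneg)

lemma digit_product_le_power: "digit_product q c k x \<le> real q ^ k"
  unfolding digit_product_def
  using prod_mono[of "{..<k}" "\<lambda>j. norm (dirichlet_kernel q (real q ^ j * x + c))" "\<lambda>_. real q"]
  by (simp add: norm_dirichlet_kernel_le)

lemma norm_digit_exp_sum_power:
  assumes "2 \<le> q"
  shows "norm (digit_exp_sum q c (q ^ k) x) = digit_product q c k x"
proof (induction k arbitrary: x)
  case 0
  then show ?case by (simp add: digit_exp_sum_def digit_product_def digit_sum.simps norm_mult)
next
  case (Suc k)
  then show ?case
    using digit_exp_sum_mult[OF assms, of c "q ^ k" x] by (simp add: norm_mult digit_product_Suc)
qed

lemma norm_digit_exp_sum_le_sum_digit_product: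
  assumes "2 \<le> q" "N < q ^ K"
  shows "norm (digit_exp_sum q c N x) \<le> real (q - 1) * (\<Sum>i<K. digit_product q c i x)"
  using assms(2)
proof (induction K arbitrary: N x)
  case 0
  then show ?case by (simp add: digit_exp_sum_def)
next
  case (Suc K)
  define M where "M = N div q"
  define d where "d = N mod q"
  have N: "N = q * M + d" unfolding M_def d_def by simp
  have d: "d \<le> q - 1" unfolding d_def using assms(1) by (simp add: less_Suc_eq_le[symmetric])
  have M: "M < q ^ K"
    using Suc.prems assms(1) unfolding M_def by (simp add: div_less_iff_less_mult mult.commute)
  have "norm (digit_exp_sum q c N x) \<le> norm (digit_exp_sum q c (q * M) x)
      + norm (\<Sum>r<d. e2pi (c * real (digit_sum q (q * M + r))) * e2pi (real (q * M + r) * x))"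
    unfolding N digit_exp_sum_def sum_lessThan_add by (rule norm_triangle_ineq)
  also have "norm (\<Sum>r<d. e2pi (c * real (digit_sum q (q * M + r))) * e2pi (real (q * M + r) * x))
      \<le> real d"
    using norm_sum[of "\<lambda>r. e2pi (c * real (digit_sum q (q * M + r))) * e2pi (real (q * M + r) * x)" "{..<d}"]
    by (simp add: norm_mult)
  also have "norm (digit_exp_sum q c (q * M) x)
      \<le> norm (dirichlet_kernel q (x + c)) * (real (q - 1) * (\<Sum>i<K. digit_product q c i (real q * x)))"
    unfolding digit_exp_sum_mult[OF assms(1)] norm_mult by (rule mult_left_mono[OF Suc.IH[OF M]]) simp
  also have "\<dots> + real d \<le> real (q - 1) * (\<Sum>i<Suc K. digit_product q c i x)"
    using d by (simp only: sum.lessThan_Suc_shift digit_product_Suc)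
      (simp add: sum_distrib_left algebra_simps)
  finally show ?case by simp
qed

definition digit_exp_sum_sup :: "nat \<Rightarrow> real \<Rightarrow> nat \<Rightarrow> real" where
  "digit_exp_sum_sup q c N = (SUP x. norm (digit_exp_sum q c N x))"

lemma norm_le_digit_exp_sum_sup: "norm (digit_exp_sum q c N x) \<le> digit_exp_sum_sup q c N"
  unfolding digit_exp_sum_sup_def
  by (rule cSUP_upper) (auto intro!: bdd_aboveI[where M = "real N"] norm_digit_exp_sum_le)

lemma digit_exp_sum_sup_le: "(\<And>x. norm (digit_exp_sum q c N x) \<le> B) \<Longrightarrow> digit_exp_sum_sup q c N \<le> B"
  unfolding digit_exp_sum_sup_def by (rule cSUP_least) auto

lemma digit_exp_sum_sup_nonneg: "0 \<le> digit_exp_sum_sup q c N"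
  using norm_le_digit_exp_sum_sup[of q c N 0] norm_ge_zero order_trans by blast

lemma gamma_c_eq_Inf_bigo: "gamma_c q c = Inf {g. digit_exp_sum_sup q c \<in> O(\<lambda>N. real N powr g)}"
  unfolding gamma_c_def digit_exp_sum_sup_def digit_exp_sum_def e2pi_def ..

section \<open>Digit products along orbits of the map T\<close>

lemma f_c_eq_ln_norm_dirichlet_kernel:
  assumes "0 < q"
  shows "f_c q c x = (if dirichlet_kernel q (x + c) = 0 then -\<infinity>
                      else ereal (ln (norm (dirichlet_kernel q (x + c)))))"
proof (cases "x + c \<in> \<int>")
  case True
  then show ?thesis using assms by (simp add: f_c_def dirichlet_kernel_Ints)
next
  case False
  then have "sin (pi * (x + c)) \<noteq> 0" by (simp add: sin_pi_times_eq_0_iff)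
  then have "dirichlet_kernel q (x + c) = 0 \<longleftrightarrow> sin (pi * real q * (x + c)) = 0"
    using norm_dirichlet_kernel_nonint[OF False, of q] by (metis abs_eq_0 divide_eq_0_iff norm_eq_zero)
  then show ?thesis
    using False by (simp add: f_c_def Let_def norm_dirichlet_kernel_nonint)
qed

lemma borel_measurable_f_c:
  assumes "0 < q"
  shows "f_c q c \<in> borel_measurable borel"
proof -
  have [measurable]: "(\<lambda>x. dirichlet_kernel q (x + c)) \<in> borel_measurable borel"
    by (intro borel_measurable_continuous_onI continuous_on_compose2[OF continuous_on_dirichlet_kernel]
        continuous_intros) auto
  have "(\<lambda>x. if dirichlet_kernel q (x + c) = 0 then -\<infinity>
             else ereal (ln (norm (dirichlet_kernel q (x + c))))) \<in> borel_measurable borel"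
    by measurable
  moreover have "f_c q c = (\<lambda>x. if dirichlet_kernel q (x + c) = 0 then -\<infinity>
                                   else ereal (ln (norm (dirichlet_kernel q (x + c)))))"
    using f_c_eq_ln_norm_dirichlet_kernel[OF assms] by (intro ext)
  ultimately show ?thesis by simp
qed

lemma times_q_map_in_unit_interval: "times_q_map q x \<in> {0..<1}"
  by (simp add: times_q_map_def frac_lt_1)

lemma funpow_times_q_map:
  assumes "y \<in> {0..<1}"
  shows "(times_q_map q ^^ j) y = frac (real q ^ j * y)"
proof (induction j)
  case 0
  then show ?case using assms by (simp add: frac_eq)
next
  case (Suc j)
  have "frac (real q * frac z) = frac (real q * z)" for z
  proof -
    have "real q * frac z = real q * z + of_int (- (int q * \<lfloor>z\<rfloor>))"
      by (simp add: frac_def algebra_simps)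
    then show ?thesis
      by (simp only: frac_add_of_int_right)
  qed
  then show ?case
    using Suc by (simp add: times_q_map_def mult.assoc)
qed

lemma digit_product_eq_prod_funpow:
  assumes "y \<in> {0..<1}"
  shows "digit_product q c k y = (\<Prod>j<k. norm (dirichlet_kernel q ((times_q_map q ^^ j) y + c)))"
proof -
  have "dirichlet_kernel q (frac z + c) = dirichlet_kernel q (z + c)" for z
    by (rule dirichlet_kernel_cong_Ints) (simp add: frac_def)
  then show ?thesis
    by (simp add: digit_product_def funpow_times_q_map[OF assms])
qed

lemma space_circle_borel: "space circle_borel = {0..<1}"
  by (simp add: circle_borel_def space_restrict_space)

lemma measurable_times_q_map: "times_q_map q \<in> circle_borel \<rightarrow>\<^sub>M circle_borel"
  unfolding circle_borel_def
proof (rule measurable_restrict_space3)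
  show "times_q_map q \<in> borel \<rightarrow>\<^sub>M borel"
    unfolding times_q_map_def frac_def by measurable
qed (use times_q_map_in_unit_interval in auto)

lemma orbit_measure_in_invariant_measures:
  assumes "0 < L" "y \<in> {0..<1}" "(times_q_map q ^^ L) y = y"
  shows "orbit_measure circle_borel (times_q_map q) y L \<in> invariant_measures q"
proof -
  let ?\<mu> = "orbit_measure circle_borel (times_q_map q) y L"
  have "distr ?\<mu> ?\<mu> (times_q_map q) = distr ?\<mu> circle_borel (times_q_map q)"
    by (rule distr_cong) simp_all
  then show ?thesis
    using assms measurable_times_q_map[of q]
    by (simp add: invariant_measures_def space_circle_borel prob_space_orbit_measure
        distr_orbit_measure_periodic cong: measurable_cong_sets)
qed

lemma grid_point_periodic:
  assumes "a < q ^ L - 1"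
  shows "real a / real (q ^ L - 1) \<in> {0..<1}"
    and "(times_q_map q ^^ L) (real a / real (q ^ L - 1)) = real a / real (q ^ L - 1)"
proof -
  define M where "M = q ^ L - 1"
  have "q ^ L = Suc M" "a < M"
    using assms unfolding M_def by auto
  then have qL: "real q ^ L = real M + 1" and aM: "real a < real M"
    by (simp_all flip: of_nat_power)
  then show y: "real a / real (q ^ L - 1) \<in> {0..<1}"
    unfolding M_def[symmetric] by simp
  have "real q ^ L * (real a / real M) = real a / real M + of_int (int a)"
    using qL aM by (simp add: field_simps)
  then show "(times_q_map q ^^ L) (real a / real (q ^ L - 1)) = real a / real (q ^ L - 1)"
    using y unfolding M_def[symmetric] by (simp only: funpow_times_q_map frac_add_of_int_right) (simp add: frac_eq)
qed

definition log_deficit :: "nat \<Rightarrow> real \<Rightarrow> real \<Rightarrow> ennreal" where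
  "log_deficit q c x = e2ennreal (ereal (ln (real q)) - f_c q c x)"

lemma upper_bdd_integral_f_c:
  "upper_bdd_integral M (ln (real q)) (f_c q c)
     = ereal (ln (real q)) - enn2ereal (\<integral>\<^sup>+ x. log_deficit q c x \<partial>M)"
  by (simp add: upper_bdd_integral_def log_deficit_def)

lemma borel_measurable_log_deficit:
  assumes "0 < q"
  shows "log_deficit q c \<in> borel_measurable circle_borel"
proof -
  have [measurable]: "f_c q c \<in> borel_measurable circle_borel"
    unfolding circle_borel_def by (rule measurable_restrict_space1[OF borel_measurable_f_c[OF assms]])
  show ?thesis
    unfolding log_deficit_def by measurable
qed

lemma log_deficit_eq:
  assumes "0 < q"
  shows "log_deficit q c x = (if dirichlet_kernel q (x + c) = 0 then \<infinity>
                              else ennreal (ln (real q) - ln (norm (dirichlet_kernel q (x + c)))))"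
  by (simp add: log_deficit_def f_c_eq_ln_norm_dirichlet_kernel[OF assms])

lemma sum_log_deficit_funpow:
  assumes q: "0 < q" and y: "y \<in> {0..<1}"
  shows "(\<Sum>j<k. log_deficit q c ((times_q_map q ^^ j) y))
       = (if digit_product q c k y = 0 then \<infinity>
          else ennreal (real k * ln (real q) - ln (digit_product q c k y)))"
proof -
  define D where "D j = dirichlet_kernel q ((times_q_map q ^^ j) y + c)" for j
  have P: "digit_product q c k y = (\<Prod>j<k. norm (D j))"
    unfolding D_def by (rule digit_product_eq_prod_funpow[OF y])
  show ?thesis
  proof (cases "\<exists>j<k. D j = 0")
    case True
    then obtain j where j: "j < k" "D j = 0" by blast
    have "log_deficit q c ((times_q_map q ^^ j) y) \<le> (\<Sum>j<k. log_deficit q c ((times_q_map q ^^ j) y))"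
      using j by (intro member_le_sum) auto
    then have "(\<Sum>j<k. log_deficit q c ((times_q_map q ^^ j) y)) = \<infinity>"
      using j log_deficit_eq[OF q] by (simp add: D_def top_unique)
    then show ?thesis
      using j P by auto
  next
    case False
    have "(\<Sum>j<k. log_deficit q c ((times_q_map q ^^ j) y))
        = (\<Sum>j<k. ennreal (ln (real q) - ln (norm (D j))))"
      using False by (intro sum.cong refl) (simp add: log_deficit_eq[OF q] D_def)
    also have "\<dots> = ennreal (\<Sum>j<k. ln (real q) - ln (norm (D j)))"
      using False ln_norm_dirichlet_kernel_le by (intro sum_ennreal) (auto simp: D_def)
    also have "(\<Sum>j<k. ln (real q) - ln (norm (D j))) = real k * ln (real q) - ln (\<Prod>j<k. norm (D j))"
      using False by (subst ln_prod) (auto simp: sum_subtractf)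
    finally show ?thesis
      using False P by simp
  qed
qed

lemma upper_bdd_integral_le_of_digit_product_le:
  assumes q: "0 < q" and M: "M \<in> invariant_measures q" and k: "0 < k" and B: "0 < B"
    and P: "\<And>x. x \<in> {0..<1} \<Longrightarrow> digit_product q c k x \<le> B"
  shows "upper_bdd_integral M (ln (real q)) (f_c q c) \<le> ereal (ln B / real k)"
proof -
  interpret prob_space M
    using M by (simp add: invariant_measures_def)
  have sets: "sets M = sets circle_borel" and space: "space M = {0..<1}"
    using M sets_eq_imp_space_eq space_circle_borel by (auto simp: invariant_measures_def)
  define I where "I = (\<integral>\<^sup>+ x. log_deficit q c x \<partial>M)"
  have "ennreal (real k * ln (real q) - ln B) \<le> (\<Sum>j<k. log_deficit q c ((times_q_map q ^^ j) x))"
    if "x \<in> space M" for x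
    using that P[of x] B digit_product_nonneg[of q c k x]
    by (auto simp: space sum_log_deficit_funpow[OF q] intro!: ennreal_leI)
  then have "(\<integral>\<^sup>+ x. ennreal (real k * ln (real q) - ln B) \<partial>M)
      \<le> (\<integral>\<^sup>+ x. (\<Sum>j<k. log_deficit q c ((times_q_map q ^^ j) x)) \<partial>M)"
    by (intro nn_integral_mono)
  also have "\<dots> = of_nat k * I"
    unfolding I_def using M borel_measurable_log_deficit[OF q]
    by (intro nn_integral_sum_funpow_invariant) (auto simp: invariant_measures_def cong: measurable_cong_sets)
  finally have "ennreal (real k * ln (real q) - ln B) \<le> ennreal (real k) * I"
    by (simp add: emeasure_space_1 ennreal_of_nat_eq_real_of_nat)
  then have "real k * ln (real q) - ln B \<le> real k * enn2ereal I"
    by (metis enn2ereal_ennreal enn2ereal_nonneg ereal_less_eq(5) less_eq_ennreal.rep_eq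
        nle_le of_nat_0_le_iff order_trans times_ennreal.rep_eq)
  then show ?thesis
    using k enn2ereal_nonneg[of I]
    by (cases "enn2ereal I") (auto simp: upper_bdd_integral_f_c I_def[symmetric] field_simps)
qed

lemma upper_bdd_integral_orbit_measure:
  assumes q: "0 < q" and L: "0 < L" and y: "y \<in> {0..<1}" and P: "0 < digit_product q c L y"
  shows "upper_bdd_integral (orbit_measure circle_borel (times_q_map q) y L) (ln (real q)) (f_c q c)
       = ereal (ln (digit_product q c L y) / real L)"
proof -
  have "ln (digit_product q c L y) \<le> ln (real q ^ L)"
    using q P digit_product_le_power[of q c L y] by (subst ln_le_cancel_iff) auto
  then have nonneg: "0 \<le> ln (real q) - ln (digit_product q c L y) / real L"
    using q L by (simp add: ln_realpow field_simps)
  have "(\<integral>\<^sup>+ x. log_deficit q c x \<partial>orbit_measure circle_borel (times_q_map q) y L)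
      = ennreal (1 / real L) * (\<Sum>j<L. log_deficit q c ((times_q_map q ^^ j) y))"
    using y measurable_times_q_map borel_measurable_log_deficit[OF q]
    by (simp add: nn_integral_orbit_measure space_circle_borel sum_distrib_left)
  also have "\<dots> = ennreal (ln (real q) - ln (digit_product q c L y) / real L)"
    using P L nonneg by (simp add: sum_log_deficit_funpow[OF q y] ennreal_mult[symmetric] field_simps)
  finally show ?thesis
    using nonneg by (simp add: upper_bdd_integral_f_c)
qed

section \<open>Admissible exponents bound beta from above\<close>

lemma sqrt_le_digit_exp_sum_sup:
  assumes N: "0 < N"
  shows "sqrt (real N) \<le> digit_exp_sum_sup q c N"
proof -
  define F where "F a = norm (digit_exp_sum q c N (real a / real N))" for a
  have parseval: "(\<Sum>a<N. (F a)\<^sup>2) = real N * real N"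
    using sum_norm_trig_poly_grid_squared[OF N, of "\<lambda>n. e2pi (c * real (digit_sum q n))"]
    by (simp add: F_def digit_exp_sum_def norm_mult)
  have "\<exists>a<N. real N \<le> (F a)\<^sup>2"
  proof (rule ccontr)
    assume "\<not> ?thesis"
    then have "(\<Sum>a<N. (F a)\<^sup>2) < (\<Sum>a<N. real N)"
      using N by (intro sum_strict_mono) (auto simp: not_le)
    then show False
      using parseval by simp
  qed
  then obtain a where "real N \<le> (F a)\<^sup>2"
    by blast
  then have "sqrt (real N) \<le> F a"
    using real_sqrt_le_mono[of "real N" "(F a)\<^sup>2"] by (simp add: F_def)
  then show ?thesis
    unfolding F_def using norm_le_digit_exp_sum_sup order_trans by blast
qed

lemma bigo_exponent_ge_half:
  assumes "digit_exp_sum_sup q c \<in> O(\<lambda>N. real N powr g)"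
  shows "1 / 2 \<le> g"
proof -
  have "(\<lambda>N. real N powr (1 / 2)) \<in> O(digit_exp_sum_sup q c)"
  proof (rule bigoI[where c = 1])
    show "\<forall>\<^sub>F N in sequentially. norm (real N powr (1 / 2)) \<le> 1 * norm (digit_exp_sum_sup q c N)"
      using eventually_gt_at_top[of 0]
      by eventually_elim (simp add: powr_half_sqrt sqrt_le_digit_exp_sum_sup digit_exp_sum_sup_nonneg)
  qed
  then have "(\<lambda>N. real N powr (1 / 2)) \<in> O(\<lambda>N. real N powr g)"
    using assms by (rule landau_o.big_trans)
  then show ?thesis
    using powr_bigo_iff[OF filterlim_real_sequentially] by simp
qed

lemma upper_bdd_integral_le_of_sup_bound:
  assumes q: "2 \<le> q" and M: "M \<in> invariant_measures q" and k: "0 < k" and C: "0 < C"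
    and bound: "digit_exp_sum_sup q c (q ^ k) \<le> C * real (q ^ k) powr g"
  shows "upper_bdd_integral M (ln (real q)) (f_c q c) \<le> ereal (ln C / real k + g * ln (real q))"
proof -
  have "digit_product q c k x \<le> C * real (q ^ k) powr g" for x
    using norm_le_digit_exp_sum_sup[of q c "q ^ k" x] bound
    unfolding norm_digit_exp_sum_power[OF q] by linarith
  then have "upper_bdd_integral M (ln (real q)) (f_c q c) \<le> ereal (ln (C * real (q ^ k) powr g) / real k)"
    using k q C by (intro upper_bdd_integral_le_of_digit_product_le M) auto
  also have "ln (C * real (q ^ k) powr g) / real k = ln C / real k + g * ln (real q)"
    using k q C by (simp add: ln_mult ln_realpow field_simps)
  finally show ?thesis .
qed

lemma beta_c_le_of_bigo:
  assumes q: "2 \<le> q" and O: "digit_exp_sum_sup q c \<in> O(\<lambda>N. real N powr g)"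
  shows "beta_c q c \<le> ereal (g * ln (real q))"
proof -
  obtain C where C: "0 < C" "\<forall>\<^sub>F N in sequentially. norm (digit_exp_sum_sup q c N) \<le> C * norm (real N powr g)"
    using landau_o.bigE[OF O] by blast
  then obtain N0 where N0: "\<And>N. N0 \<le> N \<Longrightarrow> digit_exp_sum_sup q c N \<le> C * real N powr g"
    by (auto simp: eventually_sequentially digit_exp_sum_sup_nonneg)
  have N0_le: "N0 \<le> q ^ k" if "N0 \<le> k" for k
  proof -
    have "k < 2 ^ k"
      by (rule less_exp)
    also have "\<dots> \<le> q ^ k"
      using q by (intro power_mono) auto
    finally show ?thesis
      using that by linarith
  qed
  have lim: "(\<lambda>k. ereal (ln C / real k + g * ln (real q))) \<longlonglongrightarrow> ereal (g * ln (real q))"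
    using tendsto_add[OF lim_const_over_n tendsto_const, of "ln C" "g * ln (real q)"] by simp
  show ?thesis
    unfolding beta_c_def
  proof (rule SUP_least)
    fix M assume M: "M \<in> invariant_measures q"
    have "\<forall>\<^sub>F k in sequentially. upper_bdd_integral M (ln (real q)) (f_c q c)
        \<le> ereal (ln C / real k + g * ln (real q))"
      using eventually_conj[OF eventually_ge_at_top[of N0] eventually_ge_at_top[of 1]]
      by eventually_elim (auto intro!: upper_bdd_integral_le_of_sup_bound q M C N0 N0_le)
    then show "upper_bdd_integral M (ln (real q)) (f_c q c) \<le> ereal (g * ln (real q))"
      by (rule tendsto_lowerbound[OF lim]) simp
  qed
qed

lemma beta_c_le_ln: "beta_c q c \<le> ereal (ln (real q))"
  unfolding beta_c_def upper_bdd_integral_f_c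
  by (rule SUP_least) (simp add: ereal_diff_le_self)

section \<open>Exponents above beta / log q are admissible\<close>

lemma digit_product_grid_le:
  assumes q: "2 \<le> q" and L: "0 < L" and b: "beta_c q c < ereal b" and a: "a < q ^ L - 1"
  shows "digit_product q c L (real a / real (q ^ L - 1)) \<le> exp (real L * b)"
proof (cases "digit_product q c L (real a / real (q ^ L - 1)) = 0")
  case False
  define y where "y = real a / real (q ^ L - 1)"
  define P where "P = digit_product q c L y"
  have P: "0 < P"
    using False digit_product_nonneg[of q c L y] unfolding P_def y_def by linarith
  have y: "y \<in> {0..<1}" "(times_q_map q ^^ L) y = y"
    unfolding y_def using grid_point_periodic[OF a] by auto
  have "ereal (ln P / real L) = upper_bdd_integral (orbit_measure circle_borel (times_q_map q) y L)
                                  (ln (real q)) (f_c q c)"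
    using q L y P unfolding P_def by (simp add: upper_bdd_integral_orbit_measure)
  also have "\<dots> \<le> beta_c q c"
    unfolding beta_c_def by (intro SUP_upper orbit_measure_in_invariant_measures L y)
  also have "\<dots> < ereal b"
    by (fact b)
  finally have "ln P < real L * b"
    using L by (simp add: field_simps)
  then show ?thesis
    using P unfolding P_def y_def by (metis exp_less_cancel_iff exp_ln less_imp_le)
qed simp

lemma digit_product_le_of_grid_bound:
  assumes q: "2 \<le> q" and L: "0 < L"
    and B: "\<And>a. a < q ^ L - 1 \<Longrightarrow> digit_product q c L (real a / real (q ^ L - 1)) \<le> B"
  shows "digit_product q c L y \<le> 2 + (4 + 3 * ln (real (q ^ L - 1))) * B"
proof -
  define M where "M = q ^ L - 1"
  have "q ^ 1 \<le> q ^ L"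
    using L q by (intro power_increasing) auto
  then have M: "0 < M" "q ^ L = Suc M"
    unfolding M_def using q by auto
  have P: "digit_product q c L x = norm (\<Sum>n<Suc M. e2pi (c * real (digit_sum q n)) * e2pi (real n * x))"
    for x
    using norm_digit_exp_sum_power[OF q, of c L x] by (simp add: digit_exp_sum_def M(2))
  have "norm (\<Sum>n<Suc M. e2pi (c * real (digit_sum q n)) * e2pi (real n * y))
      \<le> 2 * norm (e2pi (c * real (digit_sum q M))) + (4 + 3 * ln (real M)) * B"
    using B unfolding P M_def[symmetric] by (rule norm_trig_poly_Suc_le_grid_bound[OF M(1)])
  then show ?thesis
    unfolding P M_def by simp
qed

lemma digit_product_le_of_beta_c_less:
  assumes q: "2 \<le> q" and b: "beta_c q c < ereal b" "0 \<le> b"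
  shows "digit_product q c i x \<le> (6 + 3 * real i * ln (real q)) * exp (real i * b)"
proof (cases "i = 0")
  case False
  have "1 < q ^ i" "1 < real q ^ i"
    using one_less_power[of q i] one_less_power[of "real q" i] q False by auto
  then have "ln (real (q ^ i - 1)) \<le> ln (real (q ^ i))"
    using q by (subst ln_le_cancel_iff) auto
  also have "\<dots> = real i * ln (real q)"
    using q by (simp add: ln_realpow)
  finally have "ln (real (q ^ i - 1)) \<le> real i * ln (real q)" .
  then have "(4 + 3 * ln (real (q ^ i - 1))) * exp (real i * b)
      \<le> (4 + 3 * real i * ln (real q)) * exp (real i * b)"
    by (intro mult_right_mono) auto
  moreover have "digit_product q c i x \<le> 2 + (4 + 3 * ln (real (q ^ i - 1))) * exp (real i * b)"
    using False q b by (intro digit_product_le_of_grid_bound digit_product_grid_le) auto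
  moreover have "2 \<le> 2 * exp (real i * b)"
    using b by simp
  moreover have "(6 + 3 * real i * ln (real q)) * exp (real i * b)
      = 2 * exp (real i * b) + (4 + 3 * real i * ln (real q)) * exp (real i * b)"
    by (simp add: algebra_simps)
  ultimately show ?thesis
    by linarith
qed simp

lemma norm_digit_exp_sum_le_of_beta_c_less:
  assumes q: "2 \<le> q" and b: "beta_c q c < ereal b" "0 \<le> b" and N: "N < q ^ K"
  shows "norm (digit_exp_sum q c N x)
       \<le> real (q - 1) * (real K * ((6 + 3 * real K * ln (real q)) * exp (real K * b)))"
proof -
  have "digit_product q c i x \<le> (6 + 3 * real K * ln (real q)) * exp (real K * b)" if "i < K" for i
  proof -
    have "digit_product q c i x \<le> (6 + 3 * real i * ln (real q)) * exp (real i * b)"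
      by (rule digit_product_le_of_beta_c_less[OF q b])
    also have "\<dots> \<le> (6 + 3 * real K * ln (real q)) * exp (real K * b)"
      using that q b by (intro mult_mono) (auto intro!: mult_right_mono)
    finally show ?thesis .
  qed
  then have "(\<Sum>i<K. digit_product q c i x) \<le> real K * ((6 + 3 * real K * ln (real q)) * exp (real K * b))"
    using sum_bounded_above[of "{..<K}" "\<lambda>i. digit_product q c i x"] by simp
  then show ?thesis
    using norm_digit_exp_sum_le_sum_digit_product[OF q N, of c x] by (meson mult_left_mono of_nat_0_le_iff order_trans)
qed

lemma mult_ln_le_ln_of_power_le:
  assumes "q ^ n \<le> N" "0 < q"
  shows "real n * ln (real q) \<le> ln (real N)"
proof -
  have "real n * ln (real q) = ln (real (q ^ n))"
    using assms by (simp add: ln_realpow)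
  also have "\<dots> \<le> ln (real N)"
    using assms by (subst ln_le_cancel_iff) (auto simp: less_le_trans[of 0 "q ^ n" N])
  finally show ?thesis .
qed

lemma digit_exp_sum_sup_le_of_beta_c_less:
  assumes q: "2 \<le> q" and b: "beta_c q c < ereal b" "0 \<le> b" and N: "1 \<le> N"
  shows "digit_exp_sum_sup q c N \<le> real (q - 1) * exp b * (1 + 1 / ln (real q)) * (6 + 3 * ln (real q))
                                     * (1 + ln (real N))\<^sup>2 * real N powr (b / ln (real q))"
proof -
  obtain n where n: "q ^ n \<le> N" "N < q ^ Suc n"
    using ex_power_ivl1[OF q N] by auto
  have lq: "0 < ln (real q)" and lN: "0 \<le> ln (real N)"
    using q N by auto
  have n_le: "real n * ln (real q) \<le> ln (real N)"
    using n(1) q by (intro mult_ln_le_ln_of_power_le) auto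
  have "real (Suc n) \<le> (1 + 1 / ln (real q)) * (1 + ln (real N))"
  proof -
    have "real n \<le> ln (real N) / ln (real q)"
      using n_le lq by (simp add: field_simps)
    also have "\<dots> \<le> (1 + ln (real N)) / ln (real q)"
      using lq by (intro divide_right_mono) auto
    finally show ?thesis
      using lN by (simp add: algebra_simps)
  qed
  moreover have "6 + 3 * real (Suc n) * ln (real q) \<le> (6 + 3 * ln (real q)) * (1 + ln (real N))"
  proof -
    have "3 * ln (real N) \<le> (6 + 3 * ln (real q)) * ln (real N)"
      using lq lN by (intro mult_right_mono) auto
    then show ?thesis
      using n_le by (simp add: algebra_simps)
  qed
  moreover have "exp (real (Suc n) * b) \<le> exp b * real N powr (b / ln (real q))"
  proof -
    have "real n * b = (real n * ln (real q)) * (b / ln (real q))"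
      using lq by simp
    also have "\<dots> \<le> ln (real N) * (b / ln (real q))"
      using n_le lq b by (intro mult_right_mono) auto
    finally show ?thesis
      using N by (simp add: powr_def exp_add[symmetric] algebra_simps)
  qed
  ultimately have "real (Suc n) * ((6 + 3 * real (Suc n) * ln (real q)) * exp (real (Suc n) * b))
      \<le> ((1 + 1 / ln (real q)) * (1 + ln (real N)))
         * (((6 + 3 * ln (real q)) * (1 + ln (real N))) * (exp b * real N powr (b / ln (real q))))"
    using lq lN by (intro mult_mono) auto
  then have "norm (digit_exp_sum q c N x) \<le> real (q - 1) * (((1 + 1 / ln (real q)) * (1 + ln (real N)))
         * (((6 + 3 * ln (real q)) * (1 + ln (real N))) * (exp b * real N powr (b / ln (real q)))))" for x
    by (rule order_trans[OF norm_digit_exp_sum_le_of_beta_c_less[OF q b n(2)] mult_left_mono]) simp_all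
  then have "digit_exp_sum_sup q c N \<le> real (q - 1) * (((1 + 1 / ln (real q)) * (1 + ln (real N)))
         * (((6 + 3 * ln (real q)) * (1 + ln (real N))) * (exp b * real N powr (b / ln (real q)))))"
    by (rule digit_exp_sum_sup_le)
  then show ?thesis
    by (simp add: power2_eq_square mult_ac)
qed

lemma one_plus_ln_le_powr:
  fixes x d :: real
  assumes "1 \<le> x" "0 < d"
  shows "1 + ln x \<le> (1 + 1 / d) * x powr d"
proof -
  have "ln (x powr d) \<le> x powr d - 1"
    using assms by (intro ln_le_minus_one) simp
  then have "ln x \<le> x powr d / d"
    using assms by (simp add: ln_powr field_simps)
  moreover have "1 \<le> x powr d"
    using assms by (intro ge_one_powr_ge_zero) auto
  ultimately show ?thesis
    by (simp add: distrib_right)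
qed

lemma bigo_of_beta_c_less:
  assumes q: "2 \<le> q" and b: "beta_c q c < ereal b" "0 \<le> b" and g: "b / ln (real q) < g"
  shows "digit_exp_sum_sup q c \<in> O(\<lambda>N. real N powr g)"
proof -
  define d where "d = (g - b / ln (real q)) / 2"
  define C where "C = real (q - 1) * exp b * (1 + 1 / ln (real q)) * (6 + 3 * ln (real q))"
  have d: "0 < d" and C: "0 \<le> C"
    using g q unfolding d_def C_def by auto
  have "digit_exp_sum_sup q c N \<le> C * (1 + 1 / d)\<^sup>2 * real N powr g" if N: "1 \<le> N" for N
  proof -
    have "(1 + ln (real N))\<^sup>2 \<le> ((1 + 1 / d) * real N powr d)\<^sup>2"
      using one_plus_ln_le_powr[of "real N" d] N d by (intro power_mono) auto
    also have "\<dots> = (1 + 1 / d)\<^sup>2 * real N powr (2 * d)"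
      by (simp add: power_mult_distrib power2_eq_square powr_add[symmetric])
    finally have "C * (1 + ln (real N))\<^sup>2 * real N powr (b / ln (real q))
        \<le> C * ((1 + 1 / d)\<^sup>2 * real N powr (2 * d)) * real N powr (b / ln (real q))"
      using C by (intro mult_right_mono mult_left_mono) auto
    also have "\<dots> = C * (1 + 1 / d)\<^sup>2 * real N powr (2 * d + b / ln (real q))"
      by (simp add: powr_add)
    also have "2 * d + b / ln (real q) = g"
      unfolding d_def by (simp add: field_simps)
    finally show ?thesis
      using digit_exp_sum_sup_le_of_beta_c_less[OF q b N] unfolding C_def by simp
  qed
  then have "\<forall>N\<ge>1. norm (digit_exp_sum_sup q c N) \<le> C * (1 + 1 / d)\<^sup>2 * norm (real N powr g)"
    by (simp add: digit_exp_sum_sup_nonneg)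
  then show ?thesis
    by (intro bigoI) (auto simp: eventually_sequentially)
qed

lemma ereal_Inf_eq_divide:
  fixes V :: "real set" and \<beta> :: ereal
  assumes t: "0 < t" and m: "0 < m" and finite: "\<beta> \<noteq> \<infinity>"
    and lower: "\<And>g. g \<in> V \<Longrightarrow> m \<le> g \<and> \<beta> \<le> ereal (g * t)"
    and upper: "\<And>b g. \<beta> < ereal b \<Longrightarrow> 0 \<le> b \<Longrightarrow> b / t < g \<Longrightarrow> g \<in> V"
  shows "ereal (Inf V) = \<beta> / ereal t"
proof -
  define B where "B = max 0 (real_of_ereal \<beta>) + 1"
  have B: "\<beta> < ereal B" "0 \<le> B"
    using finite unfolding B_def by (cases \<beta>) auto
  have V: "V \<noteq> {}" "bdd_below V"
    using upper[OF B, of "B / t + 1"] lower by (auto intro: bdd_belowI[of V m])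
  have Inf_ge: "m \<le> Inf V"
    using V(1) lower by (intro cInf_greatest) auto
  have Inf_le: "Inf V \<le> g" if "\<beta> < ereal b" "0 \<le> b" "b / t \<le> g" for b g
  proof (rule field_le_epsilon)
    fix e :: real assume "0 < e"
    then show "Inf V \<le> g + e"
      using that by (intro cInf_lower[OF upper V(2)]) auto
  qed
  \<comment> \<open>If \<open>\<beta> < 0\<close>, every \<open>g > 0\<close> would be admissible, contradicting \<open>m \<le> Inf V\<close>.\<close>
  obtain r where r: "\<beta> = ereal r"
    using finite Inf_ge Inf_le[of 0 "m / 2"] m t by (cases \<beta>) auto
  have "0 \<le> r"
    using Inf_ge Inf_le[of 0 "m / 2"] m t r by (cases "0 \<le> r") auto
  have "r / t \<le> Inf V"
    using V(1) lower t r by (intro cInf_greatest) (auto simp: field_simps)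
  moreover have "Inf V \<le> r / t"
  proof (rule field_le_epsilon)
    fix e :: real assume "0 < e"
    then show "Inf V \<le> r / t + e"
      using Inf_le[of "r + e * t" "r / t + e"] \<open>0 \<le> r\<close> t r by (simp add: field_simps)
  qed
  ultimately show ?thesis
    using r t by simp
qed

theorem proposition3p2:
  fixes q :: nat and c :: real
  assumes "q \<ge> 2"
  shows "ereal (gamma_c q c) = beta_c q c / ereal (ln (real q))"
  unfolding gamma_c_eq_Inf_bigo
proof (rule ereal_Inf_eq_divide)
  show "0 < ln (real q)" "(0::real) < 1 / 2"
    using assms by auto
  show "beta_c q c \<noteq> \<infinity>"
    using beta_c_le_ln[of q c] by auto
  show "1 / 2 \<le> g \<and> beta_c q c \<le> ereal (g * ln (real q))"
    if "g \<in> {g. digit_exp_sum_sup q c \<in> O(\<lambda>N. real N powr g)}" for g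
    using that bigo_exponent_ge_half beta_c_le_of_bigo[OF assms] by blast
  show "g \<in> {g. digit_exp_sum_sup q c \<in> O(\<lambda>N. real N powr g)}"
    if "beta_c q c < ereal b" "0 \<le> b" "b / ln (real q) < g" for b g
    using that assms by (auto intro: bigo_of_beta_c_less)
qed

end
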